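(* Let $G\in\mathcal{G}(\widehat{C}_6,\widehat{C}_7)$ and $x\in V(G)$, and suppose that the set $S^*$ is independent. Then $x$ is extendable in $H_x$ if and only if $x$ is extendable in $H^*_x$.
   Context: All graphs are finite, simple and undirected. $\mathcal{G}(\widehat{C}_6,\widehat{C}_7)$ is the family of graphs with no subgraph (not necessarily induced) isomorphic to $C_6$ or $C_7$. For a vertex set $S$, $N_i(S)$ is the set of vertices at distance exactly $i$ from $S$, $N_i[S]$ those at distance at most $i$, $N(S)=N_1(S)$, $N[S]=N_1[S]$, $N(v)=N(\{v\})$ etc. A vertex $v$ of a graph $H$ is extendable in $H$ if there is no independent set $S\subseteq N_2(v)$ (distances computed in $H$) with $N(v)\subseteq N[S]$ (in $H$). In $G$: $A^*$ is the set of connected components $A$ of $G[N_2(x)]$ for which there exists $a\in V(A)$ with $N(x)\cap N(a)=N(x)\cap N(V(A))$; $V(A^* )$ is the union of their vertex sets; $D=N(x)\setminus N(V(A^* ))$; $H_x=G[N_2[x]\setminus N[V(A^* )]]$; $S^*=\{v\in N_2(x)\setminus V(A^* ) : |N(v)\cap D|\ge 2\}$ (a subset of $V(H_x)$); and $H^*_x=G[V(H_x)\setminus N[S^*]]$ (neighbourhoods in $G$). *)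

theory Defs
  imports Main
begin

definition graph :: "'a set \<Rightarrow> ('a \<Rightarrow> 'a \<Rightarrow> bool) \<Rightarrow> bool" where
  "graph V E \<longleftrightarrow> finite V \<and> (\<forall>u v. E u v \<longrightarrow> u \<in> V \<and> v \<in> V)
      \<and> (\<forall>u v. E u v \<longrightarrow> E v u) \<and> (\<forall>v. \<not> E v v)"

definition has_cycle :: "'a set \<Rightarrow> ('a \<Rightarrow> 'a \<Rightarrow> bool) \<Rightarrow> nat \<Rightarrow> bool" where
  "has_cycle V E k \<longleftrightarrow> (\<exists>f :: nat \<Rightarrow> 'a. inj_on f {..<k} \<and> f ` {..<k} \<subseteq> V
      \<and> (\<forall>i<k. E (f i) (f ((i + 1) mod k))))"

definition no_C6_C7 :: "'a set \<Rightarrow> ('a \<Rightarrow> 'a \<Rightarrow> bool) \<Rightarrow> bool" where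
  "no_C6_C7 V E \<longleftrightarrow> graph V E \<and> \<not> has_cycle V E 6 \<and> \<not> has_cycle V E 7"

definition walk :: "'a set \<Rightarrow> ('a \<Rightarrow> 'a \<Rightarrow> bool) \<Rightarrow> 'a list \<Rightarrow> bool" where
  "walk W E p \<longleftrightarrow> p \<noteq> [] \<and> set p \<subseteq> W \<and> successively E p"

text \<open>N_i[S] in G[W]: vertices of W at distance at most i from S (distance in G[W]).\<close>
definition closed_nbhd :: "'a set \<Rightarrow> ('a \<Rightarrow> 'a \<Rightarrow> bool) \<Rightarrow> 'a set \<Rightarrow> nat \<Rightarrow> 'a set" where
  "closed_nbhd W E S i = {v. \<exists>p. walk W E p \<and> hd p \<in> S \<and> last p = v \<and> length p \<le> Suc i}"

definition nbhd :: "'a set \<Rightarrow> ('a \<Rightarrow> 'a \<Rightarrow> bool) \<Rightarrow> 'a set \<Rightarrow> nat \<Rightarrow> 'a set" where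
  "nbhd W E S i = (if i = 0 then closed_nbhd W E S 0
                   else closed_nbhd W E S i - closed_nbhd W E S (i - 1))"

definition independent :: "('a \<Rightarrow> 'a \<Rightarrow> bool) \<Rightarrow> 'a set \<Rightarrow> bool" where
  "independent E S \<longleftrightarrow> (\<forall>u\<in>S. \<forall>v\<in>S. \<not> E u v)"

definition extendable :: "'a set \<Rightarrow> ('a \<Rightarrow> 'a \<Rightarrow> bool) \<Rightarrow> 'a \<Rightarrow> bool" where
  "extendable W E v \<longleftrightarrow> \<not> (\<exists>S. S \<subseteq> nbhd W E {v} 2 \<and> independent E S
        \<and> nbhd W E {v} 1 \<subseteq> closed_nbhd W E S 1)"

definition components :: "'a set \<Rightarrow> ('a \<Rightarrow> 'a \<Rightarrow> bool) \<Rightarrow> 'a set set" where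
  "components W E = {{b. \<exists>p. walk W E p \<and> hd p = a \<and> last p = b} | a. a \<in> W}"

definition Astar :: "'a set \<Rightarrow> ('a \<Rightarrow> 'a \<Rightarrow> bool) \<Rightarrow> 'a \<Rightarrow> 'a set set" where
  "Astar V E x = {A \<in> components (nbhd V E {x} 2) E.
      \<exists>a\<in>A. nbhd V E {x} 1 \<inter> nbhd V E {a} 1 = nbhd V E {x} 1 \<inter> nbhd V E A 1}"

definition VAstar :: "'a set \<Rightarrow> ('a \<Rightarrow> 'a \<Rightarrow> bool) \<Rightarrow> 'a \<Rightarrow> 'a set" where
  "VAstar V E x = \<Union> (Astar V E x)"

definition Dset :: "'a set \<Rightarrow> ('a \<Rightarrow> 'a \<Rightarrow> bool) \<Rightarrow> 'a \<Rightarrow> 'a set" where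
  "Dset V E x = nbhd V E {x} 1 - nbhd V E (VAstar V E x) 1"

definition Hx :: "'a set \<Rightarrow> ('a \<Rightarrow> 'a \<Rightarrow> bool) \<Rightarrow> 'a \<Rightarrow> 'a set" where
  "Hx V E x = closed_nbhd V E {x} 2 - closed_nbhd V E (VAstar V E x) 1"

definition Sstar :: "'a set \<Rightarrow> ('a \<Rightarrow> 'a \<Rightarrow> bool) \<Rightarrow> 'a \<Rightarrow> 'a set" where
  "Sstar V E x = {v \<in> nbhd V E {x} 2 - VAstar V E x.
      card (nbhd V E {v} 1 \<inter> Dset V E x) \<ge> 2}"

definition Hstarx :: "'a set \<Rightarrow> ('a \<Rightarrow> 'a \<Rightarrow> bool) \<Rightarrow> 'a \<Rightarrow> 'a set" where
  "Hstarx V E x = Hx V E x - closed_nbhd V E (Sstar V E x) 1"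

end

theory Submission
  imports Defs
begin

text \<open>
  If an independent \<open>S \<subseteq> N\<^sub>2(x)\<close> dominating
  \<open>N(x)\<close> witnesses non-extendability in \<open>H\<^sup>*\<^sub>x\<close>, then \<open>S \<union> S\<^sup>*\<close> is a witness in \<open>H\<^sub>x\<close>: the vertices of
  \<open>S\<close> avoid \<open>N[S\<^sup>*]\<close>, and \<open>S\<^sup>*\<close> dominates every neighbour of \<open>x\<close> that was deleted.
  Conversely, a witness \<open>S\<close> in \<open>H\<^sub>x\<close> restricts to one in \<open>H\<^sup>*\<^sub>x\<close>, unless some \<open>s \<in> S\<close> dominating a
  surviving neighbour \<open>d\<close> of \<open>x\<close> is adjacent to some \<open>t \<in> S\<^sup>*\<close>. Such a \<open>t\<close> has two neighbours
  \<open>d\<^sub>1, d\<^sub>2 \<in> D\<close>, dominated by \<open>s\<^sub>1, s\<^sub>2 \<in> S\<close> outside \<open>A\<^sup>*\<close>. Since the component of \<open>s\<^sub>i\<close> in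
  \<open>G[N\<^sub>2(x)]\<close> is not in \<open>A\<^sup>*\<close>, it sees a second neighbour of \<open>x\<close>, and excluding \<open>C\<^sub>6\<close> and \<open>C\<^sub>7\<close>
  forces paths \<open>s\<^sub>1 y d\<^sub>2\<close> and \<open>s\<^sub>2 y' d\<^sub>1\<close> through \<open>N\<^sub>2(x)\<close>; then \<open>d\<^sub>1 s\<^sub>1 y d\<^sub>2 s\<^sub>2 y'\<close> is a 6-cycle.
\<close>

lemma walk_snoc: "walk W E (p @ [v]) \<longleftrightarrow> walk W E p \<and> v \<in> W \<and> E (last p) v \<or> p = [] \<and> v \<in> W"
  by (auto simp: walk_def successively_append_iff)

lemma closed_nbhd_0: "closed_nbhd W E S 0 = S \<inter> W"
proof (intro set_eqI iffI)
  fix v assume "v \<in> closed_nbhd W E S 0"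
  then obtain p where "walk W E p" "hd p \<in> S" "last p = v" "length p \<le> 1"
    by (auto simp: closed_nbhd_def)
  then show "v \<in> S \<inter> W" by (cases p) (auto simp: walk_def)
next
  fix v assume "v \<in> S \<inter> W"
  then have "walk W E [v]" by (simp add: walk_def)
  with \<open>v \<in> S \<inter> W\<close> show "v \<in> closed_nbhd W E S 0"
    unfolding closed_nbhd_def by force
qed

lemma closed_nbhd_Suc:
  "closed_nbhd W E S (Suc i) = closed_nbhd W E S i \<union> {v \<in> W. \<exists>u \<in> closed_nbhd W E S i. E u v}"
proof (intro set_eqI iffI)
  fix v assume "v \<in> closed_nbhd W E S (Suc i)"
  then obtain p where p: "walk W E p" "hd p \<in> S" "last p = v" "length p \<le> Suc (Suc i)"
    by (auto simp: closed_nbhd_def)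
  show "v \<in> closed_nbhd W E S i \<union> {v \<in> W. \<exists>u \<in> closed_nbhd W E S i. E u v}"
  proof (cases "length p \<le> Suc i")
    case True
    then show ?thesis using p by (auto simp: closed_nbhd_def)
  next
    case False
    define q where "q = butlast p"
    have "p \<noteq> []" "q \<noteq> []" using False unfolding q_def by (auto simp: butlast_conv_take)
    then have "p = q @ [v]" using p(3) unfolding q_def by (metis append_butlast_last_id)
    with p \<open>q \<noteq> []\<close> have "walk W E q" "hd q \<in> S" "length q \<le> Suc i" "v \<in> W" "E (last q) v"
      by (auto simp: walk_snoc)
    then show ?thesis unfolding closed_nbhd_def by blast
  qed
next
  fix v assume "v \<in> closed_nbhd W E S i \<union> {v \<in> W. \<exists>u \<in> closed_nbhd W E S i. E u v}"
  then show "v \<in> closed_nbhd W E S (Suc i)"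
  proof
    assume "v \<in> closed_nbhd W E S i"
    then show ?thesis by (force simp: closed_nbhd_def)
  next
    assume "v \<in> {v \<in> W. \<exists>u \<in> closed_nbhd W E S i. E u v}"
    then obtain q where "walk W E q" "hd q \<in> S" "length q \<le> Suc i" "v \<in> W" "E (last q) v"
      by (auto simp: closed_nbhd_def)
    then have "walk W E (q @ [v])" "hd (q @ [v]) \<in> S" "last (q @ [v]) = v"
      "length (q @ [v]) \<le> Suc (Suc i)"
      by (auto simp: walk_def successively_append_iff)
    then show ?thesis unfolding closed_nbhd_def by blast
  qed
qed

lemma closed_nbhd_1: "closed_nbhd W E S 1 = S \<inter> W \<union> {v \<in> W. \<exists>u \<in> S \<inter> W. E u v}"
  using closed_nbhd_Suc[of W E S 0] by (simp add: closed_nbhd_0)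

lemma closed_nbhd_2:
  "closed_nbhd W E S 2 = closed_nbhd W E S 1 \<union> {v \<in> W. \<exists>u \<in> closed_nbhd W E S 1. E u v}"
  using closed_nbhd_Suc[of W E S 1] by (simp add: numeral_2_eq_2)

lemma nbhd_1: "nbhd W E S 1 = {v \<in> W. v \<notin> S \<and> (\<exists>u \<in> S \<inter> W. E u v)}"
proof -
  have "nbhd W E S 1 = closed_nbhd W E S 1 - closed_nbhd W E S 0" by (simp add: nbhd_def)
  then show ?thesis unfolding closed_nbhd_1 closed_nbhd_0 by auto
qed

lemma nbhd_1_singleton:
  assumes "x \<in> W" "\<not> E x x"
  shows "nbhd W E {x} 1 = {v \<in> W. E x v}"
  using assms unfolding nbhd_1 by auto

lemma nbhd_2_singleton:
  assumes "x \<in> W" "\<not> E x x"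
  shows "nbhd W E {x} 2 = {v \<in> W. v \<noteq> x \<and> \<not> E x v \<and> (\<exists>u \<in> W. E x u \<and> E u v)}"
proof -
  have "nbhd W E {x} 2 = closed_nbhd W E {x} 2 - closed_nbhd W E {x} 1" by (simp add: nbhd_def)
  then show ?thesis using assms unfolding closed_nbhd_2 closed_nbhd_1 by auto
qed

lemma nbhd_2_singleton_mono:
  assumes "x \<in> W" "W \<subseteq> W'" "\<not> E x x"
  shows "nbhd W E {x} 2 \<subseteq> nbhd W' E {x} 2"
  unfolding nbhd_2_singleton[of x W E, OF assms(1,3)]
    nbhd_2_singleton[of x W' E, OF subsetD[OF assms(2,1)] assms(3)]
  using assms(2) by blast

lemma not_extendable_iff:
  assumes "x \<in> W" "\<not> E x x"
  shows "\<not> extendable W E x \<longleftrightarrow> (\<exists>S \<subseteq> nbhd W E {x} 2. independent E S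
           \<and> (\<forall>v \<in> W. E x v \<longrightarrow> v \<in> S \<or> (\<exists>s \<in> S. E s v)))"
proof -
  have "nbhd W E {x} 1 \<subseteq> closed_nbhd W E S 1 \<longleftrightarrow> (\<forall>v \<in> W. E x v \<longrightarrow> v \<in> S \<or> (\<exists>s \<in> S. E s v))"
    if "S \<subseteq> nbhd W E {x} 2" for S
  proof -
    have "S \<subseteq> W" using that nbhd_2_singleton[of x W E] assms by blast
    then show ?thesis unfolding nbhd_1_singleton[of x W E, OF assms] closed_nbhd_1 by blast
  qed
  then show ?thesis unfolding extendable_def by blast
qed

lemma has_cycle_if_closed_walk:
  assumes "distinct cs" "set cs \<subseteq> V" "successively E cs" "E (last cs) (hd cs)" "cs \<noteq> []"
  shows "has_cycle V E (length cs)"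
  unfolding has_cycle_def
proof (intro exI[of _ "(!) cs"] conjI allI impI)
  show "inj_on ((!) cs) {..<length cs}"
    using assms(1) by (simp add: inj_on_def nth_eq_iff_index_eq)
  show "(!) cs ` {..<length cs} \<subseteq> V"
    using assms(2) by auto
  fix i assume i: "i < length cs"
  show "E (cs ! i) (cs ! ((i + 1) mod length cs))"
  proof (cases "Suc i < length cs")
    case True
    then show ?thesis using successively_nth[OF assms(3)] by simp
  next
    case False
    then have "i = length cs - 1" using i by simp
    then show ?thesis using assms(4,5) by (simp add: last_conv_nth hd_conv_nth)
  qed
qed

locale C6_C7_free_rooted =
  fixes V :: "'a set" and E :: "'a \<Rightarrow> 'a \<Rightarrow> bool" and x :: 'a
  assumes no_C6_C7: "no_C6_C7 V E" and root_in_V: "x \<in> V"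
begin

abbreviation "N2 \<equiv> nbhd V E {x} 2"
abbreviation "VA \<equiv> VAstar V E x"
abbreviation "D \<equiv> Dset V E x"
abbreviation "H \<equiv> Hx V E x"
abbreviation "H_star \<equiv> Hstarx V E x"
abbreviation "S_star \<equiv> Sstar V E x"

lemma graph: "graph V E" using no_C6_C7 by (simp add: no_C6_C7_def)

lemma edge_sym: "E u v \<Longrightarrow> E v u" using graph by (auto simp: graph_def)
lemma no_loop [simp]: "\<not> E v v" using graph by (auto simp: graph_def)
lemma edge_in_V: "E u v \<Longrightarrow> u \<in> V" "E u v \<Longrightarrow> v \<in> V" using graph by (auto simp: graph_def)

lemma no_C6:
  assumes "distinct [a, b, c, d, e, f]" "E a b" "E b c" "E c d" "E d e" "E e f" "E f a"
  shows False
proof -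
  have "has_cycle V E (length [a, b, c, d, e, f])"
    by (rule has_cycle_if_closed_walk) (use assms edge_in_V in auto)
  then show False using no_C6_C7 by (simp add: no_C6_C7_def numeral_eq_Suc)
qed

lemma no_C7:
  assumes "distinct [a, b, c, d, e, f, g]" "E a b" "E b c" "E c d" "E d e" "E e f" "E f g" "E g a"
  shows False
proof -
  have "has_cycle V E (length [a, b, c, d, e, f, g])"
    by (rule has_cycle_if_closed_walk) (use assms edge_in_V in auto)
  then show False using no_C6_C7 by (simp add: no_C6_C7_def numeral_eq_Suc)
qed

lemma nbhd_1_vertex: "v \<in> V \<Longrightarrow> nbhd V E {v} 1 = {w. E v w}"
  using nbhd_1_singleton[of v V E] edge_in_V by auto

lemma mem_N2: "v \<in> N2 \<longleftrightarrow> v \<noteq> x \<and> \<not> E x v \<and> (\<exists>u. E x u \<and> E u v)"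
  using nbhd_2_singleton[of x V E] root_in_V edge_in_V by auto

lemma N2_far_from_root: "v \<in> N2 \<Longrightarrow> v \<noteq> x \<and> \<not> E x v" using mem_N2 by blast

lemma VA_subset_N2: "VA \<subseteq> N2"
  unfolding VAstar_def Astar_def components_def walk_def by auto

lemma VA_closed:
  assumes "a \<in> VA" "v \<in> N2" "E a v"
  shows "v \<in> VA"
proof -
  obtain A where A: "A \<in> Astar V E x" "a \<in> A"
    using assms(1) unfolding VAstar_def by auto
  then obtain a0 where A_def: "A = {b. \<exists>p. walk N2 E p \<and> hd p = a0 \<and> last p = b}"
    unfolding Astar_def components_def by auto
  with A obtain p where p: "walk N2 E p" "hd p = a0" "last p = a" by auto
  then have "walk N2 E (p @ [v])" "hd (p @ [v]) = a0" "last (p @ [v]) = v"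
    using assms(2,3) by (auto simp: walk_def successively_append_iff)
  then have "v \<in> A" unfolding A_def by blast
  with A show ?thesis unfolding VAstar_def by auto
qed

lemma mem_D: "d \<in> D \<longleftrightarrow> E x d \<and> (\<forall>a \<in> VA. \<not> E a d)"
proof -
  have "d \<notin> VA" if "E x d" using that VA_subset_N2 mem_N2 by auto
  then show ?thesis
    unfolding Dset_def nbhd_1_vertex[OF root_in_V] nbhd_1 using root_in_V edge_in_V by auto
qed

lemma mem_H: "v \<in> H \<longleftrightarrow> v \<in> V \<and> (v = x \<or> E x v \<or> (\<exists>u. E x u \<and> E u v))
   \<and> v \<notin> VA \<and> (\<forall>a \<in> VA. \<not> E a v)"
  unfolding Hx_def closed_nbhd_2 closed_nbhd_1 using root_in_V edge_in_V by blast

lemma mem_S_star: "t \<in> S_star \<longleftrightarrow> t \<in> N2 \<and> t \<notin> VA \<and> 2 \<le> card ({w. E t w} \<inter> D)"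
proof -
  have "t \<in> V" if "t \<in> N2" using that mem_N2 edge_in_V by blast
  then show ?thesis unfolding Sstar_def using nbhd_1_vertex by auto
qed

lemma mem_H_star: "v \<in> H_star \<longleftrightarrow> v \<in> H \<and> v \<notin> S_star \<and> (\<forall>t \<in> S_star. \<not> E t v)"
  unfolding Hstarx_def closed_nbhd_1 using edge_in_V by (auto simp: mem_H)

text \<open>Otherwise the component of \<open>s\<close> in \<open>G[N\<^sub>2(x)]\<close> and \<open>s\<close> itself both see exactly \<open>{d}\<close> in \<open>N(x)\<close>,
  so the component would belong to \<open>A\<^sup>*\<close>.\<close>
lemma N2_component_escapes:
  assumes s: "s \<in> N2" "s \<notin> VA" and d: "E x d" "E s d"
  shows "\<exists>p e. walk N2 E p \<and> hd p = s \<and> E x e \<and> e \<noteq> d \<and> E (last p) e"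
proof (rule ccontr)
  assume no_exit: "\<nexists>p e. walk N2 E p \<and> hd p = s \<and> E x e \<and> e \<noteq> d \<and> E (last p) e"
  define C where "C = {b. \<exists>p. walk N2 E p \<and> hd p = s \<and> last p = b}"
  have "walk N2 E [s]" using s by (simp add: walk_def)
  then have "s \<in> C" unfolding C_def by force
  have "C \<subseteq> N2" unfolding C_def walk_def by auto
  have "s \<in> V" "d \<in> V" using d edge_in_V by auto
  have exit_d: "e = d" if "E x e" "u \<in> C" "E u e" for u e
    using no_exit that unfolding C_def by blast
  have "C \<subseteq> V" using \<open>C \<subseteq> N2\<close> mem_N2 edge_in_V by blast
  have "d \<notin> C" using \<open>C \<subseteq> N2\<close> N2_far_from_root d by blast
  have "nbhd V E {x} 1 \<inter> nbhd V E {s} 1 = {d}"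
    using exit_d[OF _ \<open>s \<in> C\<close>] d
    unfolding nbhd_1_vertex[OF root_in_V] nbhd_1_vertex[OF \<open>s \<in> V\<close>] by blast
  moreover have "nbhd V E {x} 1 \<inter> nbhd V E C 1 = {d}"
  proof -
    have "nbhd V E C 1 = {v \<in> V. v \<notin> C \<and> (\<exists>u \<in> C. E u v)}"
      unfolding nbhd_1 using \<open>C \<subseteq> V\<close> by blast
    then show ?thesis
      unfolding nbhd_1_vertex[OF root_in_V]
      using exit_d \<open>s \<in> C\<close> \<open>d \<notin> C\<close> \<open>d \<in> V\<close> d by blast
  qed
  moreover have "C \<in> components N2 E" unfolding components_def C_def using s(1) by blast
  ultimately have "C \<in> Astar V E x" unfolding Astar_def using \<open>s \<in> C\<close> by blast
  then show False using \<open>s \<in> C\<close> s(2) unfolding VAstar_def by blast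
qed

lemma first_exit_is_neighbour:
  assumes p: "walk N2 E p" "hd p = s" and e0: "E x e0" "e0 \<noteq> d" "E (last p) e0"
    and only_d: "\<forall>e. E x e \<and> E s e \<longrightarrow> e = d"
  shows "\<exists>y \<in> N2. E s y \<and> (\<exists>e. E x e \<and> e \<noteq> d \<and> E y e)"
proof -
  define Q where "Q v \<longleftrightarrow> (\<forall>e. E x e \<and> E v e \<longrightarrow> e = d)" for v
  have Q_adj_d: "E v d" if "v \<in> N2" "Q v" for v
    using that mem_N2 edge_sym unfolding Q_def by metis
  have "p \<noteq> []" using p by (simp add: walk_def)
  have on_p: "p ! i \<in> N2" "Suc i < length p \<Longrightarrow> E (p ! i) (p ! Suc i)" if "i < length p" for i
    using p(1) that nth_mem successively_nth unfolding walk_def by blast+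
  have "\<not> Q (p ! (length p - 1))"
    using e0 \<open>p \<noteq> []\<close> unfolding Q_def by (auto simp: last_conv_nth)
  then obtain j where j: "j \<le> length p - 1" "\<forall>i<j. Q (p ! i)" "\<not> Q (p ! j)"
    using ex_least_nat_le[of "\<lambda>i. \<not> Q (p ! i)"] by blast
  have "p ! 0 = s" using p(2) \<open>p \<noteq> []\<close> by (simp add: hd_conv_nth)
  then have "s \<in> N2" using on_p(1)[of 0] \<open>p \<noteq> []\<close> by simp
  then obtain u where "E x u" "E u s" using mem_N2 by blast
  then have d_x: "E x d" using only_d edge_sym by blast
  have "j \<noteq> 0" using \<open>p ! 0 = s\<close> j(3) only_d unfolding Q_def by metis
  obtain e where e: "E x e" "E (p ! j) e" "e \<noteq> d" using j(3) unfolding Q_def by blast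
  have "j < length p" using j(1) \<open>p \<noteq> []\<close> by (simp add: less_eq_iff_succ_less)
  consider "j = 1" | k where "j = Suc (Suc k)"
    using \<open>j \<noteq> 0\<close> by (metis One_nat_def not0_implies_Suc)
  then show ?thesis
  proof cases
    case 1
    then have "p ! 1 \<in> N2" "E s (p ! 1)"
      using on_p[of 0] on_p[of 1] \<open>j < length p\<close> \<open>p ! 0 = s\<close> \<open>p \<noteq> []\<close> by auto
    then show ?thesis using e 1 by blast
  next
    case (2 k)
    \<comment> \<open>two consecutive walk vertices before the first exit both see only d, closing the 6-cycle x, d, p!k, p!(k+1), p!j, e\<close>
    have Qk: "Q (p ! k)" "Q (p ! Suc k)" using j(2) 2 by auto
    have N2k: "p ! k \<in> N2" "p ! Suc k \<in> N2" "p ! j \<in> N2" using on_p \<open>j < length p\<close> 2 by auto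
    have Ek: "E (p ! k) (p ! Suc k)" "E (p ! Suc k) (p ! j)" using on_p \<open>j < length p\<close> 2 by auto
    have "p ! k \<noteq> p ! j" using Qk j(3) by auto
    moreover have "E (p ! k) d" "E (p ! Suc k) d" using Q_adj_d Qk N2k by auto
    ultimately have "distinct [x, d, p ! k, p ! Suc k, p ! j, e]"
      using Ek e d_x N2k N2_far_from_root by (auto dest: edge_sym)
    then have False
      using no_C6 Ek e d_x \<open>E (p ! k) d\<close> by (metis edge_sym)
    then show ?thesis ..
  qed
qed

lemma N2_neighbour_towards:
  assumes d: "E x d1" "E x d2" "d1 \<noteq> d2" and t: "t \<in> N2" "E t d1" "E t d2"
    and s1: "s1 \<in> N2" "s1 \<notin> VA" "E s1 d1" "s1 \<noteq> t" "\<not> E s1 t" "\<not> E s1 d2"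
  shows "\<exists>y \<in> N2. E s1 y \<and> E y d2"
proof -
  have only_d1: "\<forall>e. E x e \<and> E s1 e \<longrightarrow> e = d1"
  proof (intro allI impI)
    fix e assume e: "E x e \<and> E s1 e"
    show "e = d1"
    proof (rule ccontr)
      assume "e \<noteq> d1"
      then have "distinct [x, e, s1, d1, t, d2]"
        using e d t s1 N2_far_from_root by auto
      then show False using no_C6 e d t s1 edge_sym by metis
    qed
  qed
  obtain p e0 where "walk N2 E p" "hd p = s1" "E x e0" "e0 \<noteq> d1" "E (last p) e0"
    using N2_component_escapes[OF s1(1,2) d(1) s1(3)] by blast
  then obtain y e where y: "y \<in> N2" "E s1 y" "E x e" "e \<noteq> d1" "E y e"
    using first_exit_is_neighbour only_d1 by blast
  have "e = d2"
  proof (rule ccontr)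
    assume "e \<noteq> d2"
    then have "distinct [x, e, y, s1, d1, t, d2]"
      using y d t s1 N2_far_from_root by (auto dest: edge_sym)
    then show False using no_C7 y d t s1 edge_sym by metis
  qed
  then show ?thesis using y by blast
qed

lemma dominator_two_path:
  assumes d: "E x d" "E x d1" "E x d2" "d1 \<noteq> d2"
    and t: "t \<in> N2" "E t d1" "E t d2" "\<not> E t d"
    and s: "s \<in> N2" "E s d" "E s t"
    and s1: "s1 \<in> N2" "s1 \<notin> VA" "E s1 d1" "s1 \<noteq> t"
  shows "\<not> E s1 d2 \<and> (\<exists>y \<in> N2. E s1 y \<and> E y d2 \<and> y \<noteq> s \<and> y \<noteq> t)"
proof -
  have base: "distinct [x, d, s, d1, t, d2]" "distinct [x, d, s, d2, t, d1]"
    using d t s N2_far_from_root by (auto dest: edge_sym)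
  have "\<not> E s d1" using no_C6[OF base(1)] d t s edge_sym by metis
  have "\<not> E s d2" using no_C6[OF base(2)] d t s edge_sym by metis
  have "s1 \<noteq> s" using \<open>\<not> E s d1\<close> s1 by blast
  have "\<not> E s1 t"
  proof
    assume "E s1 t"
    have "distinct [x, d, s, t, s1, d1]"
      using base(1) \<open>s1 \<noteq> s\<close> s1 d N2_far_from_root by auto
    then show False using no_C6 \<open>E s1 t\<close> d t s s1 edge_sym by metis
  qed
  moreover have "\<not> E s1 d2"
  proof
    assume "E s1 d2"
    have "distinct [x, d, s, t, d2, s1, d1]"
      using base(1) \<open>s1 \<noteq> s\<close> s1 d N2_far_from_root by auto
    then show False using no_C7 \<open>E s1 d2\<close> d t s s1 edge_sym by metis
  qed
  ultimately obtain y where "y \<in> N2" "E s1 y" "E y d2"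
    using N2_neighbour_towards[OF d(2-4) t(1-3) s1] by blast
  moreover have "y \<noteq> s" using \<open>E y d2\<close> \<open>\<not> E s d2\<close> by blast
  moreover have "y \<noteq> t" using \<open>E s1 y\<close> \<open>\<not> E s1 t\<close> by blast
  ultimately show ?thesis using \<open>\<not> E s1 d2\<close> by blast
qed

lemma S_star_two_D_neighbours:
  assumes "t \<in> S_star"
  obtains d1 d2 where "d1 \<in> D" "d2 \<in> D" "d1 \<noteq> d2" "E t d1" "E t d2"
proof -
  have card: "2 \<le> card ({w. E t w} \<inter> D)" using assms mem_S_star by blast
  then have "finite ({w. E t w} \<inter> D)" by (metis card.infinite not_numeral_le_zero)
  then have "\<not> card ({w. E t w} \<inter> D) \<le> Suc 0 \<Longrightarrow> \<exists>a \<in> {w. E t w} \<inter> D. \<exists>b \<in> {w. E t w} \<inter> D. a \<noteq> b"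
    using card_le_Suc0_iff_eq by blast
  with card that show ?thesis by auto
qed

text \<open>The cycle closed at the end is \<open>d\<^sub>1 s\<^sub>1 y d\<^sub>2 s\<^sub>2 y'\<close>, where \<open>s\<^sub>i\<close> dominates \<open>d\<^sub>i\<close>.\<close>
lemma dominator_not_adjacent_to_S_star:
  assumes S: "S \<subseteq> N2" "independent E S"
    and cover: "\<forall>d' \<in> D. \<exists>s' \<in> S. s' \<in> H \<and> E s' d'"
    and s: "s \<in> S" "E x d" "E s d"
    and t: "t \<in> S_star" "\<not> E t d" "E s t"
  shows False
proof -
  have indep: "\<not> E u v" if "u \<in> S" "v \<in> S" for u v
    using S(2) that unfolding independent_def by blast
  obtain d1 d2 where dd: "d1 \<in> D" "d2 \<in> D" "d1 \<noteq> d2" "E t d1" "E t d2"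
    using S_star_two_D_neighbours[OF t(1)] by blast
  have dx: "E x d1" "E x d2" using dd mem_D by auto
  have "t \<in> N2" "s \<in> N2" using t(1) mem_S_star s(1) S(1) by auto
  obtain s1 where s1: "s1 \<in> S" "s1 \<in> H" "E s1 d1" using cover dd by blast
  obtain s2 where s2: "s2 \<in> S" "s2 \<in> H" "E s2 d2" using cover dd by blast
  have "s1 \<in> N2" "s1 \<notin> VA" "s1 \<noteq> t" "s2 \<in> N2" "s2 \<notin> VA" "s2 \<noteq> t"
    using s1 s2 S(1) mem_H indep[OF s(1)] t(3) by auto
  obtain y where y: "y \<in> N2" "E s1 y" "E y d2" "y \<noteq> s" "y \<noteq> t" and "\<not> E s1 d2"
    using dominator_two_path[OF s(2) dx dd(3) \<open>t \<in> N2\<close> dd(4,5) t(2) \<open>s \<in> N2\<close> s(3) t(3)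
        \<open>s1 \<in> N2\<close> \<open>s1 \<notin> VA\<close> s1(3) \<open>s1 \<noteq> t\<close>] by blast
  obtain y' where y': "y' \<in> N2" "E s2 y'" "E y' d1" and "\<not> E s2 d1"
    using dominator_two_path[OF s(2) dx(2,1) dd(3)[symmetric] \<open>t \<in> N2\<close> dd(5,4) t(2) \<open>s \<in> N2\<close>
        s(3) t(3) \<open>s2 \<in> N2\<close> \<open>s2 \<notin> VA\<close> s2(3) \<open>s2 \<noteq> t\<close>] by blast
  have "y \<noteq> y'"
  proof
    assume "y = y'"
    have "distinct [x, d, s, t, d1, y, d2]"
      using y \<open>t \<in> N2\<close> \<open>s \<in> N2\<close> dx dd s t N2_far_from_root by (auto dest: edge_sym)
    then show False using no_C7 \<open>y = y'\<close> y y' dx s t dd edge_sym by metis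
  qed
  moreover have "s1 \<noteq> s2" "y \<noteq> s2" "y' \<noteq> s1"
    using s1 \<open>\<not> E s2 d1\<close> indep y y' s2 edge_sym by blast+
  ultimately have "distinct [d1, s1, y, d2, s2, y']"
    using s1 s2 y y' dx dd(3) \<open>s1 \<in> N2\<close> \<open>s2 \<in> N2\<close> N2_far_from_root by (auto dest: edge_sym)
  then show False using no_C6 s1 s2 y y' edge_sym by metis
qed

lemma H_subset_V: "H \<subseteq> V" using mem_H by blast

lemma H_star_subset_H: "H_star \<subseteq> H" using mem_H_star by blast

lemma root_in_H: "x \<in> H"
proof -
  have "x \<notin> VA" using VA_subset_N2 N2_far_from_root by blast
  moreover have "\<not> E a x" if "a \<in> VA" for a using that VA_subset_N2 N2_far_from_root edge_sym by blast
  ultimately show ?thesis using mem_H root_in_V by blast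
qed

lemma S_star_subset_N2: "S_star \<subseteq> N2" using mem_S_star by blast

lemma root_in_H_star: "x \<in> H_star"
proof -
  have "x \<notin> S_star" "\<forall>t \<in> S_star. \<not> E t x"
    using S_star_subset_N2 N2_far_from_root edge_sym by blast+
  then show ?thesis using root_in_H mem_H_star by blast
qed

lemma D_subset_H: "D \<subseteq> H"
proof
  fix d assume "d \<in> D"
  then have "E x d" "\<forall>a \<in> VA. \<not> E a d" using mem_D by auto
  moreover have "d \<notin> VA" using \<open>E x d\<close> VA_subset_N2 N2_far_from_root by blast
  ultimately show "d \<in> H" using mem_H edge_in_V by blast
qed

lemma S_star_subset_H: "S_star \<subseteq> H"
proof
  fix t assume t: "t \<in> S_star"
  then have "t \<in> N2" "t \<notin> VA" using mem_S_star by auto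
  moreover obtain d where "E t d" using S_star_two_D_neighbours[OF t] by metis
  moreover have "\<forall>a \<in> VA. \<not> E a t" using \<open>t \<in> N2\<close> \<open>t \<notin> VA\<close> VA_closed by blast
  moreover have "\<exists>u. E x u \<and> E u t" using \<open>t \<in> N2\<close> mem_N2 by blast
  ultimately show "t \<in> H" unfolding mem_H using edge_in_V by blast
qed

lemma nbhd_2_root:
  assumes "W \<subseteq> V" "x \<in> W"
  shows "v \<in> nbhd W E {x} 2 \<longleftrightarrow> v \<in> W \<and> v \<noteq> x \<and> \<not> E x v \<and> (\<exists>u \<in> W. E x u \<and> E u v)"
  using nbhd_2_singleton[of x W E] assms by simp

lemma not_extendable_Hx_if_not_extendable_Hstarx:
  assumes indep: "independent E S_star" and "\<not> extendable H_star E x"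
  shows "\<not> extendable H E x"
proof -
  have H_star_V: "H_star \<subseteq> V" using H_star_subset_H H_subset_V by blast
  obtain S where S: "S \<subseteq> nbhd H_star E {x} 2" "independent E S"
    and cover: "\<forall>v \<in> H_star. E x v \<longrightarrow> v \<in> S \<or> (\<exists>s \<in> S. E s v)"
    using assms(2) not_extendable_iff[of x H_star E, OF root_in_H_star no_loop] by blast
  have "S \<union> S_star \<subseteq> nbhd H E {x} 2"
  proof
    fix v assume "v \<in> S \<union> S_star"
    then show "v \<in> nbhd H E {x} 2"
    proof
      assume "v \<in> S"
      then show ?thesis
        using S(1) nbhd_2_singleton_mono[of x H_star H E, OF root_in_H_star H_star_subset_H] by auto
    next
      assume v: "v \<in> S_star"
      then obtain d where "d \<in> D" "E v d" using S_star_two_D_neighbours by metis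
      then have "d \<in> H" "E x d" "E d v" using D_subset_H mem_D edge_sym by auto
      moreover have "v \<in> H" "v \<noteq> x" "\<not> E x v" using v S_star_subset_H S_star_subset_N2 N2_far_from_root by auto
      ultimately show ?thesis unfolding nbhd_2_root[OF H_subset_V root_in_H] by blast
    qed
  qed
  moreover have "independent E (S \<union> S_star)"
  proof -
    have "S \<subseteq> H_star" using S(1) nbhd_2_root[OF H_star_V root_in_H_star] by blast
    then have "\<not> E u t \<and> \<not> E t u" if "u \<in> S" "t \<in> S_star" for u t
      using that mem_H_star edge_sym by blast
    then show ?thesis using S(2) indep unfolding independent_def by blast
  qed
  moreover have "\<forall>v \<in> H. E x v \<longrightarrow> v \<in> S \<union> S_star \<or> (\<exists>s \<in> S \<union> S_star. E s v)"
  proof (intro ballI impI)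
    fix v assume "v \<in> H" "E x v"
    show "v \<in> S \<union> S_star \<or> (\<exists>s \<in> S \<union> S_star. E s v)"
    proof (cases "\<exists>t \<in> S_star. E t v")
      case False
      moreover have "v \<notin> S_star" using \<open>E x v\<close> S_star_subset_N2 N2_far_from_root by blast
      ultimately have "v \<in> H_star" using \<open>v \<in> H\<close> mem_H_star by blast
      then show ?thesis using cover \<open>E x v\<close> by blast
    qed blast
  qed
  ultimately show ?thesis using not_extendable_iff[of x H E, OF root_in_H no_loop] by blast
qed

lemma not_extendable_Hstarx_if_not_extendable_Hx:
  assumes "\<not> extendable H E x"
  shows "\<not> extendable H_star E x"
proof -
  have H_star_V: "H_star \<subseteq> V" using H_star_subset_H H_subset_V by blast
  obtain S where S: "S \<subseteq> nbhd H E {x} 2" "independent E S"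
    and cover: "\<forall>v \<in> H. E x v \<longrightarrow> v \<in> S \<or> (\<exists>s \<in> S. E s v)"
    using assms not_extendable_iff[of x H E, OF root_in_H no_loop] by blast
  have S_H: "s \<in> H \<and> s \<noteq> x \<and> \<not> E x s \<and> (\<exists>u. E x u \<and> E u s)" if "s \<in> S" for s
    using S(1) that nbhd_2_root[OF H_subset_V root_in_H] by blast
  then have S_N2: "S \<subseteq> N2" "S \<subseteq> H" "\<forall>s \<in> S. \<not> E x s"
    using mem_N2 by blast+
  have dominated: "\<exists>s \<in> S. E s v" if "v \<in> H" "E x v" for v
    using cover that S_N2(3) by blast
  have cover_D: "\<forall>d \<in> D. \<exists>s \<in> S. s \<in> H \<and> E s d"
    using dominated D_subset_H mem_D S_N2(2) by blast
  let ?S = "S \<inter> nbhd H_star E {x} 2"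
  have "\<exists>s \<in> ?S. E s v" if v: "v \<in> H_star" "E x v" for v
  proof -
    obtain s where s: "s \<in> S" "E s v"
      using dominated v H_star_subset_H by blast
    have v_free: "\<forall>t \<in> S_star. \<not> E t v" using v(1) mem_H_star by blast
    then have "s \<notin> S_star" using s(2) by blast
    moreover have "\<not> E t s" if "t \<in> S_star" for t
      using dominator_not_adjacent_to_S_star[OF S_N2(1) S(2) cover_D s(1) v(2) s(2) that]
        v_free that edge_sym by blast
    ultimately have "s \<in> H_star" using s(1) S_N2(2) mem_H_star by blast
    moreover have "s \<noteq> x" "\<not> E x s" "E v s" using S_H[OF s(1)] s(2) edge_sym by auto
    ultimately have "s \<in> nbhd H_star E {x} 2"
      unfolding nbhd_2_root[OF H_star_V root_in_H_star] using v by blast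
    then show ?thesis using s by blast
  qed
  moreover have "independent E ?S" using S(2) unfolding independent_def by blast
  moreover have "?S \<subseteq> nbhd H_star E {x} 2" by blast
  ultimately show ?thesis unfolding not_extendable_iff[of x H_star E, OF root_in_H_star no_loop] by blast
qed

end

theorem lemma2p14:
  fixes V :: "'a set" and E :: "'a \<Rightarrow> 'a \<Rightarrow> bool" and x :: 'a
  assumes "no_C6_C7 V E"
    and "x \<in> V"
    and "independent E (Sstar V E x)"
  shows "extendable (Hx V E x) E x \<longleftrightarrow> extendable (Hstarx V E x) E x"
proof -
  interpret C6_C7_free_rooted V E x using assms(1,2) by unfold_locales
  show ?thesis
    using not_extendable_Hx_if_not_extendable_Hstarx[OF assms(3)]
      not_extendable_Hstarx_if_not_extendable_Hx by blast
qed

end
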